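(* Let $a,b\in\mathbb{N}$ with $2\leq b\leq a$ and let $x_1\geq x_2\geq\cdots\geq x_b\geq 0$ be reals. Then $$(a-b+1)\,a^{\log_b x_b}+\sum_{i=1}^{b-1}a^{\log_b x_i}\leq a^{\log_b\sum_{i=1}^{b}x_i}.$$
   Context: By convention $a^{\log_b 0}=0$, so $x_b$ (and any $x_i$) may be $0$. *)

theory Defs
  imports Complex_Main
begin

text \<open>The quantity a^(log_b x), with the paper's convention a^(log_b 0) = 0.\<close>
definition logpow :: "real \<Rightarrow> real \<Rightarrow> real \<Rightarrow> real" where
  "logpow a b x = (if x = 0 then 0 else a powr (log b x))"

end

theory Submission
  imports Defs "HOL-Analysis.Analysis"
begin

text \<open>For \<open>x \<ge> 0\<close> one has \<open>a\<^bsup>log\<^sub>b x\<^esup> = x\<^bsup>p\<^esup>\<close> with \<open>p = log\<^sub>b a \<ge> 1\<close>, so \<open>f(x) = x\<^bsup>p\<^esup>\<close> is convex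
  on \<open>[0,\<infinity>)\<close> and satisfies \<open>f(b x) = a f(x)\<close>. Convexity makes increments grow:
  \<open>f(u + d) - f(u)\<close> is monotone in \<open>u\<close>. Starting from \<open>f(b x\<^sub>b) = a f(x\<^sub>b)\<close> and adding
  the excesses \<open>x\<^sub>i - x\<^sub>b \<ge> 0\<close> for \<open>i < b\<close> one at a time, each gains at least
  \<open>f(x\<^sub>i) - f(x\<^sub>b)\<close>, which is the inequality.\<close>

lemma powr_convex_nonneg:
  assumes "(p::real) \<ge> 1"
  shows "convex_on {0..} (\<lambda>x::real. x powr p)"
proof (rule convex_on_linorderI)
  fix t x y :: real
  assume t: "0 < t" "t < 1" and xy: "x \<in> {0..}" "y \<in> {0..}" "x < y"
  show "((1 - t) *\<^sub>R x + t *\<^sub>R y) powr p \<le> (1 - t) * x powr p + t * y powr p"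
  proof (cases "x = 0")
    case True
    have "(t * y) powr p = t powr p * y powr p"
      using t xy by (simp add: powr_mult)
    also have "\<dots> \<le> t * y powr p"
      using t assms powr_le_one_le[of t p] by (intro mult_right_mono) auto
    finally show ?thesis using True by simp
  next
    case False
    with xy have "x \<in> {0<..}" "y \<in> {0<..}" by auto
    with convex_onD[OF powr_convex[OF assms]] t show ?thesis by simp
  qed
qed (simp add: convex_real_interval)

lemma convex_on_increment_mono:
  fixes f :: "real \<Rightarrow> real"
  assumes f: "convex_on I f" and I: "w \<in> I" "u + d \<in> I" and "w \<le> u" "0 \<le> d"
  shows "f (w + d) - f w \<le> f (u + d) - f u"
proof (cases "w = u + d")
  case True
  with assms have "d = 0" by linarith
  then show ?thesis by simp
next
  case False
  with assms have L: "u + d - w > 0" by linarith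
  define t where "t = d / (u + d - w)"
  have t: "0 \<le> t" "t \<le> 1" "0 \<le> 1 - t" "1 - t \<le> 1"
    using L assms by (auto simp: t_def field_simps)
  have td: "t * (u + d - w) = d"
    using L by (simp add: t_def)
  \<comment> \<open>both \<open>w + d\<close> and \<open>u\<close> lie between \<open>w\<close> and \<open>u + d\<close>, with mirrored weights\<close>
  have "w + d = (1 - t) *\<^sub>R w + t *\<^sub>R (u + d)"
    using td by (simp add: algebra_simps)
  then have "f (w + d) \<le> (1 - t) * f w + t * f (u + d)"
    using convex_onD[OF f t(1,2) I] by simp
  moreover have "u = (1 - (1 - t)) *\<^sub>R w + (1 - t) *\<^sub>R (u + d)"
    using td by (simp add: algebra_simps)
  then have "f u \<le> t * f w + (1 - t) * f (u + d)"
    using convex_onD[OF f t(3,4) I] by simp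
  ultimately show ?thesis by (simp add: algebra_simps)
qed

lemma convex_on_sum_increments_le:
  fixes f :: "real \<Rightarrow> real" and y :: "'a \<Rightarrow> real"
  assumes f: "convex_on {c..} f" and "finite A" and "c \<le> s"
    and y: "\<And>i. i \<in> A \<Longrightarrow> c \<le> y i"
  shows "f s + (\<Sum>i\<in>A. f (y i) - f c) \<le> f (s + (\<Sum>i\<in>A. y i - c))"
  using \<open>finite A\<close> y
proof (induction A rule: finite_induct)
  case empty
  then show ?case by simp
next
  case (insert j A)
  define s' where "s' = s + (\<Sum>i\<in>A. y i - c)"
  have "0 \<le> (\<Sum>i\<in>A. y i - c)"
    using insert.prems by (intro sum_nonneg) auto
  then have "c \<le> s'"
    using \<open>c \<le> s\<close> unfolding s'_def by linarith
  moreover have "c \<le> y j"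
    using insert.prems by simp
  ultimately have "f (c + (y j - c)) - f c \<le> f (s' + (y j - c)) - f s'"
    by (intro convex_on_increment_mono[OF f]) auto
  moreover have "f s + (\<Sum>i\<in>A. f (y i) - f c) \<le> f s'"
    using insert unfolding s'_def by simp
  ultimately show ?case
    using insert.hyps unfolding s'_def by (simp add: algebra_simps)
qed

lemma logpow_eq_powr_log:
  assumes "0 < a" "0 < b" "b \<noteq> 1" "0 \<le> x"
  shows "logpow a b x = x powr log b a"
  using assms by (cases "x = 0") (simp_all add: logpow_def powr_def log_def)

lemma powr_log_mult_base:
  assumes "0 < a" "0 < b" "b \<noteq> 1" "0 \<le> x"
  shows "(b * x) powr log b a = a * x powr log b a"
  using assms by (simp add: powr_mult powr_log_cancel)

theorem lemma10:
  fixes a b :: nat and x :: "nat \<Rightarrow> real"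
  assumes "2 \<le> b" and "b \<le> a"
    and "\<And>i j. 1 \<le> i \<Longrightarrow> i \<le> j \<Longrightarrow> j \<le> b \<Longrightarrow> x j \<le> x i"
    and "x b \<ge> 0"
  shows "(real a - real b + 1) * logpow (real a) (real b) (x b)
           + (\<Sum>i=1..b-1. logpow (real a) (real b) (x i))
         \<le> logpow (real a) (real b) (\<Sum>i=1..b. x i)"
proof -
  define f where "f t = t powr log b a" for t :: real
  have x_nonneg: "0 \<le> x i" if "i \<in> {1..b}" for i
    using assms(3)[of i b] assms(4) that by auto
  have logpow_f: "logpow a b t = f t" if "0 \<le> t" for t
    unfolding f_def using assms that by (intro logpow_eq_powr_log) auto
  have "log b a \<ge> 1"
    using assms by simp
  then have "convex_on {x b..} f"
    unfolding f_def using assms(4)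
    by (auto intro: convex_on_subset[OF powr_convex_nonneg] simp: convex_real_interval)
  moreover have "x b \<le> x i" if "i \<in> {1..b-1}" for i
    using assms(3)[of i b] that by auto
  moreover have "x b \<le> b * x b"
    using assms(1,4) by (simp add: mult_le_cancel_right1)
  ultimately have "f (b * x b) + (\<Sum>i=1..b-1. f (x i) - f (x b))
      \<le> f (b * x b + (\<Sum>i=1..b-1. x i - x b))"
    by (intro convex_on_sum_increments_le) auto
  moreover have "f (b * x b) = a * f (x b)"
    unfolding f_def using assms by (intro powr_log_mult_base) auto
  moreover have "(\<Sum>i=1..b. x i) = (\<Sum>i=1..b-1. x i) + x b"
    using assms(1) sum.cl_ivl_Suc[of x 1 "b - 1"] by (simp add: Suc_diff_le)
  then have "b * x b + (\<Sum>i=1..b-1. x i - x b) = (\<Sum>i=1..b. x i)"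
    using assms(1) by (simp add: sum_subtractf of_nat_diff algebra_simps)
  moreover have "(\<Sum>i=1..b-1. logpow a b (x i)) = (\<Sum>i=1..b-1. f (x i))"
    using x_nonneg logpow_f by (intro sum.cong) auto
  moreover have "logpow a b (\<Sum>i=1..b. x i) = f (\<Sum>i=1..b. x i)"
    using x_nonneg by (intro logpow_f sum_nonneg) auto
  ultimately show ?thesis
    using assms(1,2,4) logpow_f by (simp add: sum_subtractf of_nat_diff algebra_simps)
qed

end
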